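(* Consider problem (P2) with constraints C1 and C4 removed, i.e. maximize over the binary selection $x\in\{0,1\}^K$ (equivalently over sets $\Psi\subseteq\mathcal{K}$) the value $EE^*_\Psi$. Suppose the trading EEs satisfy, after relabeling, $EE^*_1>EE^*_2>\dots>EE^*_K$. Algorithm 2 is: set $\Psi=\emptyset$; for $k=1,\dots,K$ in this order, if $EE^*_{\Psi\cup\{k\}}>EE^*_\Psi$ then replace $\Psi$ by $\Psi\cup\{k\}$; output $\Psi$. Then the set $\Psi$ output by Algorithm 2 is optimal, i.e. $EE^*_\Psi\ge EE^*_{\Psi'}$ for every $\Psi'\subseteq\mathcal{K}$.
   Context: Setting: $\mathcal{K}=\{1,\dots,K\}$ macro users (MUs), $\mathcal{N}=\{1,\dots,N\}$ small-cell users (SUs). Constants: $N_0>0$, $\xi\in(0,1]$, $P_{\rm c}>0$; for each $k$: $W^k_{MC}>0$, $R^k_{MC}>0$, $h_k>0$, $g_{k,n}>0$ ($n\in\mathcal{N}$); for each $n$: $B^n_{SC}>0$, $g_n>0$. Let $k'\in\arg\max_{n}g_{k,n}$ and $\rho(b,p,g)=b\log_2(1+\frac{pg}{bN_0})$ ($=0$ if $b=0$). For $\Psi\subseteq\mathcal{K}$, $EE^*_\Psi$ is the optimal value of: with $x_k=\mathbf 1[k\in\Psi]$, maximize over $p_n\ge0$, $p_{k,k'}\ge0$, $b_{k,k'}\ge0$, $q_k\ge0$, $w_k\ge0$ $$\frac{\sum_{n}\rho(B^n_{SC},p_n,g_n)+\sum_{k}x_k\rho(b_{k,k'},p_{k,k'},g_{k,k'})}{\sum_n\frac{p_n}{\xi}+\sum_kx_k\frac{p_{k,k'}}{\xi}+\sum_kx_k\frac{q_k}{\xi}+P_{\rm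 c}}$$ subject only to $b_{k,k'}+w_k=x_kW^k_{MC}$ and $\rho(w_k,q_k,h_k)=x_kR^k_{MC}$ for all $k$ (no total power constraint and no minimum system rate constraint). For each $k$, the trading EE $EE^*_k$ is the optimal value of: maximize over $p_{k,k'}\ge0$, $b_{k,k'}\ge0$, $q_k\ge0$, $w_k\ge0$ the ratio $\frac{\rho(b_{k,k'},p_{k,k'},g_{k,k'})}{p_{k,k'}/\xi+q_k/\xi}$ subject to $b_{k,k'}+w_k\le W^k_{MC}$ and $\rho(w_k,q_k,h_k)\ge R^k_{MC}$. *)

theory Defs
  imports Complex_Main
begin

definition rho :: "real \<Rightarrow> real \<Rightarrow> real \<Rightarrow> real \<Rightarrow> real" where
  "rho N0 b p g = (if b = 0 then 0 else b * log 2 (1 + p * g / (b * N0)))"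

definition xind :: "nat set \<Rightarrow> nat \<Rightarrow> real" where
  "xind Psi k = (if k \<in> Psi then 1 else 0)"

text \<open>Parameters: N0, xi, Pc, K, N, W (= W^k_MC), R (= R^k_MC), h (= h_k), g (= g_{k,n}),
  B (= B^n_SC), gs (= g_n), kp (= k').  Variables: p (= p_n), pk (= p_{k,k'}),
  b (= b_{k,k'}), q (= q_k), w (= w_k).\<close>
definition EE_set ::
  "real \<Rightarrow> real \<Rightarrow> real \<Rightarrow> nat \<Rightarrow> nat \<Rightarrow> (nat \<Rightarrow> real) \<Rightarrow> (nat \<Rightarrow> real) \<Rightarrow> (nat \<Rightarrow> real)
   \<Rightarrow> (nat \<Rightarrow> nat \<Rightarrow> real) \<Rightarrow> (nat \<Rightarrow> real) \<Rightarrow> (nat \<Rightarrow> real) \<Rightarrow> (nat \<Rightarrow> nat) \<Rightarrow> nat set \<Rightarrow> real" where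
  "EE_set N0 xi Pc K N W R h g B gs kp Psi =
     Sup { ((\<Sum>n\<in>{1..N}. rho N0 (B n) (p n) (gs n))
              + (\<Sum>k\<in>{1..K}. xind Psi k * rho N0 (b k) (pk k) (g k (kp k))))
           / ((\<Sum>n\<in>{1..N}. p n / xi) + (\<Sum>k\<in>{1..K}. xind Psi k * (pk k / xi))
              + (\<Sum>k\<in>{1..K}. xind Psi k * (q k / xi)) + Pc)
         | p pk b q w.
           (\<forall>n\<in>{1..N}. 0 \<le> p n) \<and>
           (\<forall>k\<in>{1..K}. 0 \<le> pk k \<and> 0 \<le> b k \<and> 0 \<le> q k \<and> 0 \<le> w k \<and>
              b k + w k = xind Psi k * W k \<and>
              rho N0 (w k) (q k) (h k) = xind Psi k * R k) }"

definition EE_trade ::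
  "real \<Rightarrow> real \<Rightarrow> (nat \<Rightarrow> real) \<Rightarrow> (nat \<Rightarrow> real) \<Rightarrow> (nat \<Rightarrow> real)
   \<Rightarrow> (nat \<Rightarrow> nat \<Rightarrow> real) \<Rightarrow> (nat \<Rightarrow> nat) \<Rightarrow> nat \<Rightarrow> real" where
  "EE_trade N0 xi W R h g kp k =
     Sup { rho N0 b pk (g k (kp k)) / (pk / xi + q / xi)
         | pk b q w. 0 \<le> pk \<and> 0 \<le> b \<and> 0 \<le> q \<and> 0 \<le> w \<and>
              b + w \<le> W k \<and> R k \<le> rho N0 w q (h k) }"

definition alg2 :: "(nat set \<Rightarrow> real) \<Rightarrow> nat \<Rightarrow> nat set" where
  "alg2 EE K = foldl (\<lambda>Psi k. if EE (insert k Psi) > EE Psi then insert k Psi else Psi) {} [1..<K+1]"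

end

theory Submission
  imports Defs "HOL-Analysis.Convex"
begin

text \<open>
  Dinkelbach's parametrisation decouples the users: at level \<open>\<gamma>\<close> the objective
  rate \<open>- \<gamma> *\<close> power splits into a small-cell part plus, for every selected macro user \<open>k\<close>,
  its own gain \<open>\<rho>\<^sub>k - \<gamma> (p\<^sub>k + q\<^sub>k) / \<xi>\<close>, and \<open>k\<close> can realise a positive gain exactly
  when its trading EE exceeds \<open>\<gamma>\<close>. Hence a selection is optimal as soon as it consists of
  precisely those users whose trading EE exceeds its own EE. The greedy scan keeps this
  threshold property: adding a user raises the EE iff its trading EE beats the current EE, and
  after a successful addition the new EE still lies below the trading EE of the added user, hence
  below those of all earlier users. The strict comparisons need near-optimal points of bounded
  power, which exist because the rate grows sublinearly in the power.
\<close>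

lemma rho_nonneg:
  assumes "N0 > 0" "b \<ge> 0" "p \<ge> 0" "g \<ge> 0"
  shows "rho N0 b p g \<ge> 0"
proof -
  have "1 \<le> 1 + p * g / (b * N0)"
    using assms by simp
  then have "log 2 (1 + p * g / (b * N0)) \<ge> 0"
    by simp
  then show ?thesis
    using assms by (simp add: rho_def)
qed

lemma rho_le_linear_plus_log:
  assumes "N0 > 0" "0 \<le> b" "b \<le> Wm" "p \<ge> 0" "g \<ge> 0" "t \<ge> 1"
  shows "rho N0 b p g \<le> (p * g / (N0 * t) + Wm * ln t) / ln 2"
proof (cases "b = 0")
  case True
  then show ?thesis using assms by (simp add: rho_def)
next
  case False
  then have b: "b > 0" using assms by simp
  define x where "x = p * g / (b * N0)"
  have x: "x \<ge> 0" using assms b by (simp add: x_def)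
  have "ln ((1 + x) / t) \<le> (1 + x) / t - 1"
    using x assms by (intro ln_le_minus_one) simp
  then have "ln (1 + x) \<le> ln t + (1 + x) / t - 1"
    using x assms by (simp add: ln_div)
  then have "b * ln (1 + x) \<le> b * (ln t + (1 + x) / t - 1)"
    using b by (simp add: mult_left_mono)
  also have "\<dots> = b * ln t - b * (1 - 1 / t) + p * g / (N0 * t)"
    using b assms by (simp add: x_def field_simps)
  also have "\<dots> \<le> Wm * ln t + p * g / (N0 * t)"
    using assms b by (smt (verit) ln_ge_zero mult_right_mono mult_nonneg_nonneg divide_le_eq_1)
  finally show ?thesis
    using b by (simp add: rho_def log_def x_def divide_right_mono add.commute)
qed

lemma rho_le_small_slope:
  assumes "N0 > 0" "\<theta> > 0" "0 \<le> b" "b \<le> Wm" "p \<ge> 0" "g \<ge> 0"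
  shows "rho N0 b p g \<le> \<theta> * p + Wm * log 2 (max 1 (g / (N0 * ln 2 * \<theta>)))"
proof -
  define t where "t = max 1 (g / (N0 * ln 2 * \<theta>))"
  have t: "t \<ge> 1" by (simp add: t_def)
  have "g \<le> t * (N0 * ln 2 * \<theta>)"
    using assms by (simp add: t_def max_def divide_le_eq)
  then have "p * g \<le> p * (t * (N0 * ln 2 * \<theta>))"
    using assms by (simp add: mult_left_mono)
  then have "p * g / (N0 * t) / ln 2 \<le> \<theta> * p"
    using assms t by (simp add: field_simps)
  then show ?thesis
    using rho_le_linear_plus_log[OF assms(1,3,4,5,6) t]
    by (simp add: t_def log_def add_divide_distrib)
qed

lemma rho_mono_bandwidth:
  assumes "N0 > 0" "0 \<le> b1" "b1 \<le> b2" "p \<ge> 0" "g \<ge> 0"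
  shows "rho N0 b1 p g \<le> rho N0 b2 p g"
proof (cases "b1 = 0")
  case True
  then show ?thesis using rho_nonneg[of N0 b2 p g] assms by (simp add: rho_def)
next
  case False
  then have b1: "b1 > 0" and b2: "b2 > 0" using assms by simp_all
  define s where "s = b1 / b2"
  define y where "y = p * g / (b1 * N0)"
  have s: "0 < s" "s \<le> 1" and y: "y \<ge> 0"
    using b1 b2 assms by (auto simp: s_def y_def)
  have "(1 - s) * ln 1 + s * ln (1 + y) \<le> ln ((1 - s) *\<^sub>R 1 + s *\<^sub>R (1 + y))"
    using concave_onD[OF ln_concave, of s 1 "1 + y"] s y by simp
  then have "s * ln (1 + y) \<le> ln (1 + p * g / (b2 * N0))"
    using b1 b2 by (simp add: algebra_simps s_def y_def)
  then have "b2 * (s * ln (1 + y)) \<le> b2 * ln (1 + p * g / (b2 * N0))"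
    using b2 by (simp add: mult_left_mono)
  then show ?thesis
    using b1 b2 by (simp add: rho_def log_def y_def s_def divide_right_mono)
qed

definition required_power :: "real \<Rightarrow> real \<Rightarrow> real \<Rightarrow> real \<Rightarrow> real" where
  "required_power N0 w r h = (2 powr (r / w) - 1) * w * N0 / h"

lemma rho_required_power:
  assumes "N0 > 0" "w > 0" "h > 0"
  shows "rho N0 w (required_power N0 w r h) h = r"
proof -
  have "1 + required_power N0 w r h * h / (w * N0) = 2 powr (r / w)"
    using assms by (simp add: required_power_def field_simps)
  then show ?thesis
    using assms by (simp add: rho_def)
qed

lemma required_power_pos:
  assumes "N0 > 0" "w > 0" "h > 0" "r > 0"
  shows "required_power N0 w r h > 0"
proof -
  have "2 powr (r / w) > 1"
    using assms by simp
  then show ?thesis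
    using assms by (simp add: required_power_def)
qed

lemma required_power_le:
  assumes "N0 > 0" "w > 0" "h > 0" "q \<ge> 0" "r \<le> rho N0 w q h"
  shows "required_power N0 w r h \<le> q"
proof -
  have "r / w \<le> log 2 (1 + q * h / (w * N0))"
    using assms by (simp add: rho_def pos_divide_le_eq mult.commute)
  then have "2 powr (r / w) \<le> 1 + q * h / (w * N0)"
    using assms by (subst (asm) le_log_iff) (auto intro: add_pos_nonneg)
  then show ?thesis
    using assms by (simp add: required_power_def field_simps)
qed

definition ratio_sup :: "(real \<times> real) set \<Rightarrow> real" where
  "ratio_sup S = (SUP (a, d)\<in>S. a / d)"

locale fractional_program =
  fixes S :: "(real \<times> real) set" and c :: real
  assumes nonempty: "S \<noteq> {}"
    and c_pos: "c > 0"
    and num_nonneg: "(a, d) \<in> S \<Longrightarrow> 0 \<le> a"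
    and den_ge: "(a, d) \<in> S \<Longrightarrow> c \<le> d"
    and sublinear: "\<theta> > 0 \<Longrightarrow> \<exists>C. \<forall>(a, d)\<in>S. a \<le> \<theta> * d + C"
begin

lemma den_pos: "(a, d) \<in> S \<Longrightarrow> 0 < d"
  using den_ge c_pos by fastforce

lemma bdd_above_ratios: "bdd_above ((\<lambda>(a, d). a / d) ` S)"
proof -
  obtain C where C: "\<forall>(a, d)\<in>S. a \<le> 1 * d + C"
    using sublinear[of 1] by auto
  have "a / d \<le> 1 + \<bar>C\<bar> / c" if "(a, d) \<in> S" for a d
  proof -
    have d: "0 < d" "c \<le> d" using that den_pos den_ge by auto
    have "a / d \<le> (d + C) / d"
      using C that d by (auto intro: divide_right_mono)
    also have "\<dots> = 1 + C / d" using d by (simp add: field_simps)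
    also have "C / d \<le> \<bar>C\<bar> / c"
      using d c_pos by (smt (verit) abs_ge_self divide_right_mono frac_le abs_ge_zero)
    finally show ?thesis by simp
  qed
  then show ?thesis
    unfolding bdd_above_def by (intro exI[of _ "1 + \<bar>C\<bar> / c"]) auto
qed

lemma num_le_ratio_sup:
  assumes "(a, d) \<in> S"
  shows "a \<le> ratio_sup S * d"
proof -
  have "a / d \<le> ratio_sup S"
    unfolding ratio_sup_def using assms bdd_above_ratios
    by (metis (mono_tags, lifting) cSUP_upper case_prod_conv)
  then show ?thesis
    using den_pos[OF assms] by (simp add: pos_divide_le_eq)
qed

lemma ratio_sup_le:
  assumes "\<And>a d. (a, d) \<in> S \<Longrightarrow> a \<le> \<gamma> * d"
  shows "ratio_sup S \<le> \<gamma>"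
  unfolding ratio_sup_def
proof (rule cSUP_least[OF nonempty], clarify)
  fix a d assume "(a, d) \<in> S"
  then show "a / d \<le> \<gamma>"
    using assms den_pos by (auto simp: pos_divide_le_eq)
qed

lemma near_optimal:
  assumes "\<eta> > 0"
  obtains a d where "(a, d) \<in> S" and "a - ratio_sup S * d > - \<eta>"
proof -
  define \<gamma> where "\<gamma> = ratio_sup S"
  obtain a0 d0 where ad0: "(a0, d0) \<in> S"
    using nonempty by auto
  have "0 \<le> \<gamma>"
    using num_le_ratio_sup[OF ad0] num_nonneg[OF ad0] den_pos[OF ad0]
    unfolding \<gamma>_def by (smt (verit) mult_neg_pos)
  then consider "\<gamma> = 0" | "\<gamma> > 0" by linarith
  then show ?thesis
  proof cases
    case 1
    then show ?thesis
      using that ad0 num_nonneg[OF ad0] assms by (simp add: \<gamma>_def)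
  next
    case 2
    obtain C where C: "\<forall>(a, d)\<in>S. a \<le> \<gamma> / 4 * d + C"
      using sublinear[of "\<gamma> / 4"] 2 by auto
    define D where "D = 4 * max C 0 / \<gamma> + 1"
    have "4 * max C 0 / \<gamma> \<ge> 0" using 2 by simp
    then have D: "D > 0" by (simp add: D_def)
    define \<delta> where "\<delta> = min (\<gamma> / 2) (\<eta> / D)"
    have "\<gamma> - \<delta> < ratio_sup S"
      using 2 assms D by (simp add: \<gamma>_def \<delta>_def)
    then obtain a d where ad: "(a, d) \<in> S" and gt: "\<gamma> - \<delta> < a / d"
      unfolding ratio_sup_def using less_cSUP_iff[OF nonempty bdd_above_ratios] by auto
    have d: "0 < d" using den_pos[OF ad] .
    have a_gt: "(\<gamma> - \<delta>) * d < a" using gt d by (simp add: pos_less_divide_eq)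
    have "\<delta> \<le> \<gamma> / 2" unfolding \<delta>_def by (rule min.cobounded1)
    then have "\<gamma> / 2 * d \<le> (\<gamma> - \<delta>) * d" using d by (intro mult_right_mono) auto
    moreover have "a \<le> \<gamma> / 4 * d + C" using C ad by auto
    \<comment> \<open>near-optimal points have a bounded denominator\<close>
    ultimately have "\<gamma> * d < 4 * max C 0" using a_gt by linarith
    then have "d < 4 * max C 0 / \<gamma>"
      using 2 by (simp add: pos_less_divide_eq mult.commute)
    then have "d < D" by (simp add: D_def)
    have "\<delta> * d \<le> \<eta> / D * d" using d by (intro mult_right_mono) (auto simp: \<delta>_def)
    also have "\<dots> < \<eta> / D * D" using \<open>d < D\<close> D assms by (intro mult_strict_left_mono) auto
    also have "\<dots> = \<eta>" using D by simp
    finally have "\<delta> * d < \<eta>" .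
    then show ?thesis
      using that ad a_gt by (simp add: \<gamma>_def algebra_simps)
  qed
qed

end

locale ee_system =
  fixes N0 xi Pc :: real and K N :: nat
    and W R h :: "nat \<Rightarrow> real" and g :: "nat \<Rightarrow> nat \<Rightarrow> real"
    and B gs :: "nat \<Rightarrow> real" and kp :: "nat \<Rightarrow> nat"
  assumes N0_pos: "N0 > 0" and xi_pos: "xi > 0" and Pc_pos: "Pc > 0"
    and MU_pos: "k \<in> {1..K} \<Longrightarrow> W k > 0 \<and> R k > 0 \<and> h k > 0 \<and> g k (kp k) > 0"
    and SU_pos: "n \<in> {1..N} \<Longrightarrow> B n > 0 \<and> gs n > 0"
begin

definition mu_feasible :: "nat \<Rightarrow> real \<Rightarrow> real \<Rightarrow> real \<Rightarrow> real \<Rightarrow> bool" where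
  "mu_feasible k pk b q w \<longleftrightarrow>
     0 \<le> pk \<and> 0 \<le> b \<and> 0 \<le> q \<and> 0 \<le> w \<and> b + w = W k \<and> rho N0 w q (h k) = R k"

definition feasible ::
  "nat set \<Rightarrow> (nat \<Rightarrow> real) \<Rightarrow> (nat \<Rightarrow> real) \<Rightarrow> (nat \<Rightarrow> real) \<Rightarrow> (nat \<Rightarrow> real) \<Rightarrow> (nat \<Rightarrow> real) \<Rightarrow> bool"
where
  "feasible \<Psi> p pk b q w \<longleftrightarrow> (\<forall>n\<in>{1..N}. 0 \<le> p n) \<and>
     (\<forall>k\<in>{1..K}. 0 \<le> pk k \<and> 0 \<le> b k \<and> 0 \<le> q k \<and> 0 \<le> w k \<and>
        b k + w k = xind \<Psi> k * W k \<and> rho N0 (w k) (q k) (h k) = xind \<Psi> k * R k)"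

definition total_rate :: "nat set \<Rightarrow> (nat \<Rightarrow> real) \<Rightarrow> (nat \<Rightarrow> real) \<Rightarrow> (nat \<Rightarrow> real) \<Rightarrow> real" where
  "total_rate \<Psi> p pk b = (\<Sum>n\<in>{1..N}. rho N0 (B n) (p n) (gs n))
     + (\<Sum>k\<in>{1..K}. xind \<Psi> k * rho N0 (b k) (pk k) (g k (kp k)))"

definition total_power :: "nat set \<Rightarrow> (nat \<Rightarrow> real) \<Rightarrow> (nat \<Rightarrow> real) \<Rightarrow> (nat \<Rightarrow> real) \<Rightarrow> real" where
  "total_power \<Psi> p pk q = (\<Sum>n\<in>{1..N}. p n / xi) + (\<Sum>k\<in>{1..K}. xind \<Psi> k * (pk k / xi))
     + (\<Sum>k\<in>{1..K}. xind \<Psi> k * (q k / xi)) + Pc"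

definition operating_points :: "nat set \<Rightarrow> (real \<times> real) set" where
  "operating_points \<Psi> = {(total_rate \<Psi> p pk b, total_power \<Psi> p pk q) | p pk b q w.
     feasible \<Psi> p pk b q w}"

abbreviation EE :: "nat set \<Rightarrow> real" where
  "EE \<equiv> EE_set N0 xi Pc K N W R h g B gs kp"

lemma EE_eq_ratio_sup: "EE \<Psi> = ratio_sup (operating_points \<Psi>)"
  unfolding EE_set_def ratio_sup_def operating_points_def feasible_def
    total_rate_def total_power_def
  by (rule arg_cong[where f = Sup]) (auto; blast)

lemma feasible_iff:
  "feasible \<Psi> p pk b q w \<longleftrightarrow> (\<forall>n\<in>{1..N}. 0 \<le> p n) \<and>
     (\<forall>k\<in>{1..K}. if k \<in> \<Psi> then mu_feasible k (pk k) (b k) (q k) (w k)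
                  else 0 \<le> pk k \<and> 0 \<le> q k \<and> b k = 0 \<and> w k = 0)"
  unfolding feasible_def mu_feasible_def xind_def
  by (auto simp: rho_def)

lemma mu_feasible_witness:
  assumes "k \<in> {1..K}"
  shows "mu_feasible k 0 0 (required_power N0 (W k) (R k) (h k)) (W k)"
  using MU_pos[OF assms] N0_pos required_power_pos[of N0 "W k" "h k" "R k"]
  by (simp add: mu_feasible_def rho_required_power less_imp_le)

lemma mu_feasible_power_pos:
  assumes "k \<in> {1..K}" "mu_feasible k pk b q w"
  shows "0 < (pk + q) / xi"
proof -
  have "q \<noteq> 0"
  proof
    assume "q = 0"
    then have "rho N0 w q (h k) = 0" by (simp add: rho_def)
    then show False
      using assms MU_pos[OF assms(1)] by (simp add: mu_feasible_def)
  qed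
  then show ?thesis
    using assms xi_pos by (simp add: mu_feasible_def)
qed

lemma feasible_exists:
  "feasible \<Psi> (\<lambda>_. 0) (\<lambda>_. 0) (\<lambda>_. 0)
     (\<lambda>k. if k \<in> \<Psi> then required_power N0 (W k) (R k) (h k) else 0)
     (\<lambda>k. if k \<in> \<Psi> then W k else 0)"
  using mu_feasible_witness by (simp add: feasible_iff)

lemma total_power_ge_Pc:
  assumes "feasible \<Psi> p pk b q w"
  shows "Pc \<le> total_power \<Psi> p pk q"
  using assms xi_pos unfolding total_power_def feasible_def
  by (intro add_increasing sum_nonneg) (auto simp: xind_def)

lemma total_rate_nonneg:
  assumes "feasible \<Psi> p pk b q w"
  shows "0 \<le> total_rate \<Psi> p pk b"
  using assms N0_pos SU_pos MU_pos unfolding total_rate_def feasible_def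
  by (intro add_nonneg_nonneg sum_nonneg mult_nonneg_nonneg rho_nonneg)
    (auto simp: xind_def less_imp_le)

lemma total_rate_sublinear:
  assumes "\<theta> > 0"
  obtains C where "\<And>p pk b q w. feasible \<Psi> p pk b q w \<Longrightarrow>
    total_rate \<Psi> p pk b \<le> \<theta> * total_power \<Psi> p pk q + C"
proof -
  define L where "L gain = log 2 (max 1 (gain / (N0 * ln 2 * (\<theta> / xi))))" for gain
  have link: "rho N0 b' p' gain \<le> \<theta> * (p' / xi) + Wm * L gain"
    if "0 \<le> b'" "b' \<le> Wm" "0 \<le> p'" "0 \<le> gain" for b' Wm p' gain
    using rho_le_small_slope[of N0 "\<theta> / xi" b' Wm p' gain] that N0_pos xi_pos assms
    by (simp add: L_def)
  define C where "C = (\<Sum>n\<in>{1..N}. B n * L (gs n)) + (\<Sum>k\<in>{1..K}. W k * L (g k (kp k)))"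
  have "total_rate \<Psi> p pk b \<le> \<theta> * total_power \<Psi> p pk q + C"
    if feas: "feasible \<Psi> p pk b q w" for p pk b q w
  proof -
    have SU: "rho N0 (B n) (p n) (gs n) \<le> \<theta> * (p n / xi) + B n * L (gs n)"
      if "n \<in> {1..N}" for n
      using that feas SU_pos[OF that] by (intro link) (auto simp: feasible_def)
    have MU: "xind \<Psi> k * rho N0 (b k) (pk k) (g k (kp k))
        \<le> \<theta> * (xind \<Psi> k * (pk k / xi)) + W k * L (g k (kp k))"
      if "k \<in> {1..K}" for k
    proof (cases "k \<in> \<Psi>")
      case True
      have "0 \<le> b k" "b k \<le> W k" "0 \<le> pk k"
        using that feas True by (force simp: feasible_def xind_def)+
      then show ?thesis
        using True MU_pos[OF that] link[of "b k" "W k" "pk k" "g k (kp k)"]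
        by (simp add: xind_def)
    next
      case False
      have "0 \<le> L (g k (kp k))" by (simp add: L_def)
      then show ?thesis
        using False MU_pos[OF that] by (simp add: xind_def)
    qed
    have "total_rate \<Psi> p pk b \<le> (\<Sum>n\<in>{1..N}. \<theta> * (p n / xi) + B n * L (gs n))
        + (\<Sum>k\<in>{1..K}. \<theta> * (xind \<Psi> k * (pk k / xi)) + W k * L (g k (kp k)))"
      unfolding total_rate_def using sum_mono[OF SU] sum_mono[OF MU] by (rule add_mono)
    also have "\<dots> = \<theta> * ((\<Sum>n\<in>{1..N}. p n / xi) + (\<Sum>k\<in>{1..K}. xind \<Psi> k * (pk k / xi))) + C"
      by (simp add: C_def sum.distrib sum_distrib_left distrib_left)
    also have "\<dots> \<le> \<theta> * total_power \<Psi> p pk q + C"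
    proof -
      have "0 \<le> (\<Sum>k\<in>{1..K}. xind \<Psi> k * (q k / xi))"
        using feas xi_pos by (intro sum_nonneg) (auto simp: feasible_def xind_def)
      then show ?thesis
        using assms Pc_pos by (simp add: total_power_def)
    qed
    finally show ?thesis .
  qed
  then show ?thesis using that by blast
qed

lemma fractional_program_operating_points: "fractional_program (operating_points \<Psi>) Pc"
proof
  show "operating_points \<Psi> \<noteq> {}"
    using feasible_exists unfolding operating_points_def by blast
  show "0 < Pc" by (rule Pc_pos)
  fix a d assume "(a, d) \<in> operating_points \<Psi>"
  then show "0 \<le> a" "Pc \<le> d"
    using total_rate_nonneg total_power_ge_Pc unfolding operating_points_def by auto
next
  fix \<theta> :: real assume "\<theta> > 0"
  then obtain C where "\<And>p pk b q w. feasible \<Psi> p pk b q w \<Longrightarrow>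
      total_rate \<Psi> p pk b \<le> \<theta> * total_power \<Psi> p pk q + C"
    using total_rate_sublinear by blast
  then show "\<exists>C. \<forall>(a, d)\<in>operating_points \<Psi>. a \<le> \<theta> * d + C"
    unfolding operating_points_def by (intro exI[of _ C]) auto
qed

lemma total_rate_le_EE:
  assumes "feasible \<Psi> p pk b q w"
  shows "total_rate \<Psi> p pk b \<le> EE \<Psi> * total_power \<Psi> p pk q"
proof -
  have "(total_rate \<Psi> p pk b, total_power \<Psi> p pk q) \<in> operating_points \<Psi>"
    using assms unfolding operating_points_def by blast
  then show ?thesis
    unfolding EE_eq_ratio_sup
    by (rule fractional_program.num_le_ratio_sup[OF fractional_program_operating_points])
qed

lemma EE_le:
  assumes "\<And>p pk b q w. feasible \<Psi> p pk b q w \<Longrightarrow>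
    total_rate \<Psi> p pk b \<le> \<gamma> * total_power \<Psi> p pk q"
  shows "EE \<Psi> \<le> \<gamma>"
  unfolding EE_eq_ratio_sup
  using assms by (intro fractional_program.ratio_sup_le[OF fractional_program_operating_points])
    (auto simp: operating_points_def)

lemma EE_near_optimal:
  assumes "\<eta> > 0"
  obtains p pk b q w where "feasible \<Psi> p pk b q w"
    and "total_rate \<Psi> p pk b - EE \<Psi> * total_power \<Psi> p pk q > - \<eta>"
proof -
  obtain a d where "(a, d) \<in> operating_points \<Psi>" "a - EE \<Psi> * d > - \<eta>"
    using fractional_program.near_optimal[OF fractional_program_operating_points assms]
    unfolding EE_eq_ratio_sup by blast
  then show ?thesis
    using that unfolding operating_points_def by blast
qed

definition mu_gain :: "real \<Rightarrow> nat \<Rightarrow> real \<Rightarrow> real \<Rightarrow> real \<Rightarrow> real" where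
  "mu_gain \<gamma> k pk b q = rho N0 b pk (g k (kp k)) - \<gamma> * ((pk + q) / xi)"

lemma dinkelbach_split:
  "total_rate \<Psi> p pk b - \<gamma> * total_power \<Psi> p pk q =
     (\<Sum>n\<in>{1..N}. rho N0 (B n) (p n) (gs n) - \<gamma> * (p n / xi))
     + (\<Sum>k\<in>{1..K} \<inter> \<Psi>. mu_gain \<gamma> k (pk k) (b k) (q k)) - \<gamma> * Pc"
proof -
  have restrict: "(\<Sum>k\<in>{1..K}. xind \<Psi> k * f k) = (\<Sum>k\<in>{1..K} \<inter> \<Psi>. f k)"
    for f :: "nat \<Rightarrow> real"
    by (auto simp: xind_def sum.inter_restrict intro!: sum.cong)
  show ?thesis
    unfolding total_rate_def total_power_def mu_gain_def restrict
    by (simp add: sum_subtractf sum_distrib_left sum.distrib algebra_simps add_divide_distrib)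
qed

lemma exchange_macro_users:
  assumes feas: "feasible \<Psi> p pk b q w"
    and new: "\<And>k. k \<in> (\<Phi> - \<Psi>) \<inter> {1..K} \<Longrightarrow> mu_feasible k (pk' k) (b' k) (q' k) (w' k)"
  shows "\<exists>pk2 b2 q2 w2. feasible \<Phi> p pk2 b2 q2 w2 \<and>
    total_rate \<Phi> p pk2 b2 - \<gamma> * total_power \<Phi> p pk2 q2 =
      total_rate \<Psi> p pk b - \<gamma> * total_power \<Psi> p pk q
      - (\<Sum>k\<in>(\<Psi> - \<Phi>) \<inter> {1..K}. mu_gain \<gamma> k (pk k) (b k) (q k))
      + (\<Sum>k\<in>(\<Phi> - \<Psi>) \<inter> {1..K}. mu_gain \<gamma> k (pk' k) (b' k) (q' k))"
proof -
  define A where "A = \<Phi> - \<Psi>"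
  define pk2 where "pk2 k = (if k \<in> A then pk' k else pk k)" for k
  define q2 where "q2 k = (if k \<in> A then q' k else q k)" for k
  define b2 where "b2 k = (if k \<in> \<Phi> then if k \<in> A then b' k else b k else 0)" for k
  define w2 where "w2 k = (if k \<in> \<Phi> then if k \<in> A then w' k else w k else 0)" for k
  let ?gain = "\<lambda>k. mu_gain \<gamma> k (pk k) (b k) (q k)"
  have "feasible \<Phi> p pk2 b2 q2 w2"
    using feas new unfolding feasible_iff
    by (auto simp: A_def pk2_def q2_def b2_def w2_def mu_feasible_def)
  moreover have "(\<Sum>k\<in>{1..K} \<inter> \<Phi>. mu_gain \<gamma> k (pk2 k) (b2 k) (q2 k))
      = (\<Sum>k\<in>{1..K} \<inter> \<Phi> \<inter> \<Psi>. ?gain k)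
        + (\<Sum>k\<in>A \<inter> {1..K}. mu_gain \<gamma> k (pk' k) (b' k) (q' k))"
    by (subst sum.Int_Diff[where B = \<Psi>]) (auto simp: A_def pk2_def q2_def b2_def Int_Diff
        intro!: arg_cong2[where f = "(+)"] sum.cong)
  moreover have "(\<Sum>k\<in>{1..K} \<inter> \<Psi>. ?gain k)
      = (\<Sum>k\<in>{1..K} \<inter> \<Phi> \<inter> \<Psi>. ?gain k) + (\<Sum>k\<in>(\<Psi> - \<Phi>) \<inter> {1..K}. ?gain k)"
    by (subst sum.Int_Diff[where B = \<Phi>]) (auto intro!: arg_cong2[where f = "(+)"] sum.cong)
  ultimately show ?thesis
    unfolding dinkelbach_split A_def by (intro exI[of _ pk2] exI[of _ b2] exI[of _ q2] exI[of _ w2])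
      (simp add: algebra_simps)
qed

abbreviation ET :: "nat \<Rightarrow> real" where
  "ET \<equiv> EE_trade N0 xi W R h g kp"

definition trade_ratios :: "nat \<Rightarrow> real set" where
  "trade_ratios k = {rho N0 b pk (g k (kp k)) / (pk / xi + q / xi) | pk b q w.
     0 \<le> pk \<and> 0 \<le> b \<and> 0 \<le> q \<and> 0 \<le> w \<and> b + w \<le> W k \<and> R k \<le> rho N0 w q (h k)}"

lemma ET_eq_Sup: "ET k = Sup (trade_ratios k)"
  by (simp add: EE_trade_def trade_ratios_def)

lemma mu_feasible_ratio_in_trade_ratios:
  "mu_feasible k pk b q w \<Longrightarrow> rho N0 b pk (g k (kp k)) / ((pk + q) / xi) \<in> trade_ratios k"
  unfolding trade_ratios_def mu_feasible_def add_divide_distrib by force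

lemma bdd_above_trade_ratios:
  assumes k: "k \<in> {1..K}"
  shows "bdd_above (trade_ratios k)"
proof -
  define M where "M = xi * g k (kp k) / (N0 * ln 2)"
  have M: "M \<ge> 0" using MU_pos[OF k] xi_pos N0_pos by (simp add: M_def)
  have "x \<le> M" if x_in: "x \<in> trade_ratios k" for x
  proof -
    obtain pk b q where pq: "0 \<le> pk" "0 \<le> b" "0 \<le> q"
      and x: "x = rho N0 b pk (g k (kp k)) / (pk / xi + q / xi)"
      using x_in unfolding trade_ratios_def by blast
    have "rho N0 b pk (g k (kp k)) \<le> (pk * g k (kp k) / (N0 * 1) + b * ln 1) / ln 2"
      using pq N0_pos MU_pos[OF k] by (intro rho_le_linear_plus_log) auto
    also have "\<dots> = M * (pk / xi)" using xi_pos by (simp add: M_def)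
    also have "\<dots> \<le> M * (pk / xi + q / xi)"
      using M pq xi_pos by (intro mult_left_mono) auto
    finally have rate: "rho N0 b pk (g k (kp k)) \<le> M * (pk / xi + q / xi)" .
    have "0 \<le> pk / xi + q / xi" using pq xi_pos by simp
    show ?thesis
    proof (cases "pk / xi + q / xi = 0")
      case True
      then show ?thesis using M x by simp
    next
      case False
      with \<open>0 \<le> pk / xi + q / xi\<close> have "0 < pk / xi + q / xi" by simp
      then show ?thesis using rate x by (simp add: pos_divide_le_eq)
    qed
  qed
  then show ?thesis unfolding bdd_above_def by blast
qed

lemma trade_ratio_dominated:
  assumes k: "k \<in> {1..K}" and x: "x \<in> trade_ratios k"
  obtains pk b q w where "mu_feasible k pk b q w" and "x * ((pk + q) / xi) \<le> rho N0 b pk (g k (kp k))"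
proof -
  obtain pk b0 q0 w where t: "0 \<le> pk" "0 \<le> b0" "0 \<le> q0" "0 \<le> w" "b0 + w \<le> W k"
      "R k \<le> rho N0 w q0 (h k)" and x_eq: "x = rho N0 b0 pk (g k (kp k)) / (pk / xi + q0 / xi)"
    using x unfolding trade_ratios_def by blast
  have pos: "W k > 0" "R k > 0" "h k > 0" "g k (kp k) > 0" using MU_pos[OF k] by auto
  have w: "w > 0" using t pos by (cases "w = 0") (auto simp: rho_def)
  \<comment> \<open>lower the MU power to the exact requirement and give it all unused bandwidth\<close>
  define q where "q = required_power N0 w (R k) (h k)"
  define b where "b = W k - w"
  have q: "0 < q" "q \<le> q0"
    using required_power_pos[of N0 w "h k" "R k"] required_power_le[of N0 w "h k" q0 "R k"]
      N0_pos w pos t by (auto simp: q_def)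
  have feas: "mu_feasible k pk b q w"
    using t q N0_pos w pos by (simp add: mu_feasible_def b_def q_def rho_required_power)
  have "0 \<le> x" using x_eq t N0_pos pos xi_pos by (simp add: rho_nonneg)
  then have "x * ((pk + q) / xi) \<le> x * ((pk + q0) / xi)"
    using q xi_pos by (intro mult_left_mono divide_right_mono) auto
  also have "\<dots> = rho N0 b0 pk (g k (kp k))"
  proof -
    have "0 < pk / xi + q0 / xi" using q t xi_pos by (simp add: add_nonneg_pos)
    then show ?thesis by (simp add: x_eq add_divide_distrib)
  qed
  also have "\<dots> \<le> rho N0 b pk (g k (kp k))"
    using t N0_pos pos by (intro rho_mono_bandwidth) (auto simp: b_def)
  finally show ?thesis using that feas by blast
qed

lemma less_ET_iff:
  assumes k: "k \<in> {1..K}"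
  shows "\<gamma> < ET k \<longleftrightarrow> (\<exists>pk b q w. mu_feasible k pk b q w \<and> 0 < mu_gain \<gamma> k pk b q)"
proof
  assume "\<gamma> < ET k"
  then obtain x where x: "x \<in> trade_ratios k" "\<gamma> < x"
    using less_cSupD[of "trade_ratios k"] mu_feasible_ratio_in_trade_ratios mu_feasible_witness[OF k]
    unfolding ET_eq_Sup by blast
  obtain pk b q w where feas: "mu_feasible k pk b q w"
    and le: "x * ((pk + q) / xi) \<le> rho N0 b pk (g k (kp k))"
    using trade_ratio_dominated[OF k x(1)] by blast
  have "\<gamma> * ((pk + q) / xi) < x * ((pk + q) / xi)"
    using x(2) mu_feasible_power_pos[OF k feas] by (rule mult_strict_right_mono)
  then have "0 < mu_gain \<gamma> k pk b q"
    using le by (simp add: mu_gain_def)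
  then show "\<exists>pk b q w. mu_feasible k pk b q w \<and> 0 < mu_gain \<gamma> k pk b q"
    using feas by blast
next
  assume "\<exists>pk b q w. mu_feasible k pk b q w \<and> 0 < mu_gain \<gamma> k pk b q"
  then obtain pk b q w where feas: "mu_feasible k pk b q w" and gain: "0 < mu_gain \<gamma> k pk b q"
    by blast
  have c: "0 < (pk + q) / xi" by (rule mu_feasible_power_pos[OF k feas])
  have "\<gamma> * ((pk + q) / xi) < rho N0 b pk (g k (kp k))"
    using gain by (simp add: mu_gain_def)
  then have "\<gamma> < rho N0 b pk (g k (kp k)) / ((pk + q) / xi)"
    by (simp only: pos_less_divide_eq[OF c])
  also have "\<dots> \<le> ET k"
    unfolding ET_eq_Sup
    by (rule cSup_upper[OF mu_feasible_ratio_in_trade_ratios[OF feas] bdd_above_trade_ratios[OF k]])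
  finally show "\<gamma> < ET k" .
qed

lemma less_EE:
  assumes "feasible \<Psi> p pk b q w" and "\<gamma> * total_power \<Psi> p pk q < total_rate \<Psi> p pk b"
  shows "\<gamma> < EE \<Psi>"
proof -
  have "0 < total_power \<Psi> p pk q"
    using total_power_ge_Pc[OF assms(1)] Pc_pos by linarith
  moreover have "\<gamma> * total_power \<Psi> p pk q < EE \<Psi> * total_power \<Psi> p pk q"
    using assms total_rate_le_EE[OF assms(1)] by linarith
  ultimately show ?thesis by simp
qed

lemma EE_insert_gt:
  assumes m: "m \<in> {1..K}" "m \<notin> \<Psi>" and "EE \<Psi> < ET m"
  shows "EE \<Psi> < EE (insert m \<Psi>)"
proof -
  let ?\<gamma> = "EE \<Psi>"
  obtain pk0 b0 q0 w0 where feas0: "mu_feasible m pk0 b0 q0 w0"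
    and gain: "0 < mu_gain ?\<gamma> m pk0 b0 q0"
    using less_ET_iff[OF m(1)] assms(3) by blast
  obtain p pk b q w where feas: "feasible \<Psi> p pk b q w"
    and near: "total_rate \<Psi> p pk b - ?\<gamma> * total_power \<Psi> p pk q > - mu_gain ?\<gamma> m pk0 b0 q0"
    using EE_near_optimal[OF gain] by blast
  have sets: "(\<Psi> - insert m \<Psi>) \<inter> {1..K} = {}" "(insert m \<Psi> - \<Psi>) \<inter> {1..K} = {m}"
    using m by auto
  \<comment> \<open>switching \<open>m\<close> on at its profitable operating point adds its gain to the Dinkelbach objective\<close>
  obtain pk2 b2 q2 w2 where feas2: "feasible (insert m \<Psi>) p pk2 b2 q2 w2"
    and eq: "total_rate (insert m \<Psi>) p pk2 b2 - ?\<gamma> * total_power (insert m \<Psi>) p pk2 q2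
      = total_rate \<Psi> p pk b - ?\<gamma> * total_power \<Psi> p pk q
        - (\<Sum>k\<in>(\<Psi> - insert m \<Psi>) \<inter> {1..K}. mu_gain ?\<gamma> k (pk k) (b k) (q k))
        + (\<Sum>k\<in>(insert m \<Psi> - \<Psi>) \<inter> {1..K}. mu_gain ?\<gamma> k pk0 b0 q0)"
    using exchange_macro_users[OF feas, where \<Phi> = "insert m \<Psi>" and pk' = "\<lambda>_. pk0" and b' = "\<lambda>_. b0"
        and q' = "\<lambda>_. q0" and w' = "\<lambda>_. w0" and \<gamma> = ?\<gamma>] feas0 by auto
  from eq near have "?\<gamma> * total_power (insert m \<Psi>) p pk2 q2 < total_rate (insert m \<Psi>) p pk2 b2"
    unfolding sets by simp
  then show ?thesis by (rule less_EE[OF feas2])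
qed

lemma EE_insert_less_ET:
  assumes m: "m \<in> {1..K}" "m \<notin> \<Psi>" and inc: "EE \<Psi> < EE (insert m \<Psi>)"
  shows "EE (insert m \<Psi>) < ET m"
proof (rule ccontr)
  let ?\<gamma> = "EE (insert m \<Psi>)"
  assume "\<not> ?\<gamma> < ET m"
  then have no_gain: "mu_gain ?\<gamma> m pk b q \<le> 0" if "mu_feasible m pk b q w" for pk b q w
    using less_ET_iff[OF m(1)] that by (meson not_less)
  define gap where "gap = (?\<gamma> - EE \<Psi>) * Pc"
  have "gap > 0" using inc Pc_pos by (simp add: gap_def)
  then obtain p pk b q w where feas: "feasible (insert m \<Psi>) p pk b q w"
    and near: "total_rate (insert m \<Psi>) p pk b - ?\<gamma> * total_power (insert m \<Psi>) p pk q > - gap"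
    using EE_near_optimal by blast
  have sets: "(insert m \<Psi> - \<Psi>) \<inter> {1..K} = {m}" "(\<Psi> - insert m \<Psi>) \<inter> {1..K} = {}"
    using m by auto
  \<comment> \<open>switching \<open>m\<close> off loses nothing at level \<open>?\<gamma>\<close>, but every point of \<open>\<Psi>\<close> is \<open>gap\<close> below that level\<close>
  obtain pk2 b2 q2 w2 where feas2: "feasible \<Psi> p pk2 b2 q2 w2"
    and eq: "total_rate \<Psi> p pk2 b2 - ?\<gamma> * total_power \<Psi> p pk2 q2
      = total_rate (insert m \<Psi>) p pk b - ?\<gamma> * total_power (insert m \<Psi>) p pk q
        - (\<Sum>k\<in>(insert m \<Psi> - \<Psi>) \<inter> {1..K}. mu_gain ?\<gamma> k (pk k) (b k) (q k))
        + (\<Sum>k\<in>(\<Psi> - insert m \<Psi>) \<inter> {1..K}. mu_gain ?\<gamma> k (pk k) (b k) (q k))"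
    using exchange_macro_users[OF feas, where \<Phi> = \<Psi> and pk' = pk and b' = b and q' = q and w' = w
        and \<gamma> = ?\<gamma>] by (auto simp: sets)
  have "mu_feasible m (pk m) (b m) (q m) (w m)"
    using feas m(1) by (auto simp: feasible_iff)
  then have "mu_gain ?\<gamma> m (pk m) (b m) (q m) \<le> 0"
    by (rule no_gain)
  moreover have "total_rate \<Psi> p pk2 b2 - ?\<gamma> * total_power \<Psi> p pk2 q2
      \<le> (EE \<Psi> - ?\<gamma>) * total_power \<Psi> p pk2 q2"
    using total_rate_le_EE[OF feas2] by (simp add: algebra_simps)
  moreover have "(EE \<Psi> - ?\<gamma>) * total_power \<Psi> p pk2 q2 \<le> (EE \<Psi> - ?\<gamma>) * Pc"
    using total_power_ge_Pc[OF feas2] inc by (intro mult_left_mono_neg) auto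
  ultimately show False
    using eq near unfolding sets gap_def by (simp add: algebra_simps)
qed

lemma EE_le_threshold_set:
  assumes threshold: "\<And>k. k \<in> {1..K} \<Longrightarrow> k \<in> G \<longleftrightarrow> EE G < ET k"
  shows "EE \<Psi> \<le> EE G"
proof (rule EE_le)
  let ?\<gamma> = "EE G"
  fix p pk b q w assume feas: "feasible \<Psi> p pk b q w"
  have "\<exists>pk b q w. mu_feasible k pk b q w \<and> 0 < mu_gain ?\<gamma> k pk b q"
    if "k \<in> (G - \<Psi>) \<inter> {1..K}" for k
    using that threshold[of k] less_ET_iff[of k ?\<gamma>] by auto
  then obtain pk' b' q' w' where new: "\<And>k. k \<in> (G - \<Psi>) \<inter> {1..K} \<Longrightarrow>
      mu_feasible k (pk' k) (b' k) (q' k) (w' k) \<and> 0 < mu_gain ?\<gamma> k (pk' k) (b' k) (q' k)"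
    by metis
  obtain pk2 b2 q2 w2 where feas2: "feasible G p pk2 b2 q2 w2"
    and eq: "total_rate G p pk2 b2 - ?\<gamma> * total_power G p pk2 q2 =
         total_rate \<Psi> p pk b - ?\<gamma> * total_power \<Psi> p pk q
         - (\<Sum>k\<in>(\<Psi> - G) \<inter> {1..K}. mu_gain ?\<gamma> k (pk k) (b k) (q k))
         + (\<Sum>k\<in>(G - \<Psi>) \<inter> {1..K}. mu_gain ?\<gamma> k (pk' k) (b' k) (q' k))"
    using exchange_macro_users[OF feas, where \<Phi> = G and pk' = pk' and b' = b' and q' = q' and w' = w'
        and \<gamma> = ?\<gamma>] new by blast
  have "(\<Sum>k\<in>(\<Psi> - G) \<inter> {1..K}. mu_gain ?\<gamma> k (pk k) (b k) (q k)) \<le> 0"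
  proof (rule sum_nonpos)
    fix k assume k: "k \<in> (\<Psi> - G) \<inter> {1..K}"
    then have "mu_feasible k (pk k) (b k) (q k) (w k)"
      using feas by (auto simp: feasible_iff)
    moreover have "\<not> ?\<gamma> < ET k"
      using k threshold[of k] by auto
    ultimately show "mu_gain ?\<gamma> k (pk k) (b k) (q k) \<le> 0"
      using less_ET_iff[of k ?\<gamma>] k by (auto simp: not_less)
  qed
  moreover have "0 \<le> (\<Sum>k\<in>(G - \<Psi>) \<inter> {1..K}. mu_gain ?\<gamma> k (pk' k) (b' k) (q' k))"
    using new by (intro sum_nonneg) (simp add: less_imp_le)
  moreover have "total_rate G p pk2 b2 - ?\<gamma> * total_power G p pk2 q2 \<le> 0"
    using total_rate_le_EE[OF feas2] by simp
  ultimately show "total_rate \<Psi> p pk b \<le> ?\<gamma> * total_power \<Psi> p pk q"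
    using eq by linarith
qed

end

lemma alg2_Suc:
  "alg2 E (Suc j) = (let G = alg2 E j in if E (insert (Suc j) G) > E G then insert (Suc j) G else G)"
  by (simp add: alg2_def Let_def)

lemma alg2_threshold_set:
  fixes E :: "nat set \<Rightarrow> real" and T :: "nat \<Rightarrow> real"
  assumes decreasing: "\<And>i j. i \<in> {1..K} \<Longrightarrow> j \<in> {1..K} \<Longrightarrow> i < j \<Longrightarrow> T j < T i"
    and improves: "\<And>\<Psi> m. m \<in> {1..K} \<Longrightarrow> m \<notin> \<Psi> \<Longrightarrow> E \<Psi> < T m \<Longrightarrow> E \<Psi> < E (insert m \<Psi>)"
    and below: "\<And>\<Psi> m. m \<in> {1..K} \<Longrightarrow> m \<notin> \<Psi> \<Longrightarrow> E \<Psi> < E (insert m \<Psi>) \<Longrightarrow>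
      E (insert m \<Psi>) < T m"
    and "j \<le> K"
  shows "alg2 E j \<subseteq> {1..j} \<and> (\<forall>k\<in>{1..j}. k \<in> alg2 E j \<longleftrightarrow> E (alg2 E j) < T k)"
  using \<open>j \<le> K\<close>
proof (induction j)
  case 0
  then show ?case by (simp add: alg2_def)
next
  case (Suc j)
  define G where "G = alg2 E j"
  define m where "m = Suc j"
  have IH: "G \<subseteq> {1..j}" "\<And>k. k \<in> {1..j} \<Longrightarrow> k \<in> G \<longleftrightarrow> E G < T k"
    using Suc by (auto simp: G_def)
  have m: "m \<in> {1..K}" "m \<notin> G" using Suc.prems IH(1) by (auto simp: m_def)
  have earlier: "T m < T k" if "k \<in> {1..j}" for k
    using decreasing that Suc.prems by (simp add: m_def)
  have m_new: "k \<noteq> m" if "k \<in> {1..j}" for k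
    using that by (simp add: m_def)
  show ?case
  proof (cases "E G < E (insert m G)")
    case True
    have step: "alg2 E (Suc j) = insert m G"
      using True by (simp add: alg2_Suc G_def m_def)
    have m_in: "E (insert m G) < T m" using below[OF m True] .
    have "k \<in> G \<longleftrightarrow> E (insert m G) < T k" if "k \<in> {1..j}" for k
      using IH(2)[OF that] earlier[OF that] True m_in by (cases "k \<in> G") auto
    then show ?thesis
      unfolding step using IH(1) m_in m_new by (auto simp: m_def le_Suc_eq)
  next
    case False
    have step: "alg2 E (Suc j) = G"
      using False by (simp add: alg2_Suc G_def m_def)
    have "\<not> E G < T m" using improves[OF m] False by blast
    then show ?thesis
      unfolding step using IH m m_new by (auto simp: m_def le_Suc_eq)
  qed
qed

theorem corollary1:
  fixes N0 xi Pc :: real and K N :: nat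
    and W R h :: "nat \<Rightarrow> real" and g :: "nat \<Rightarrow> nat \<Rightarrow> real"
    and B gs :: "nat \<Rightarrow> real" and kp :: "nat \<Rightarrow> nat"
  assumes "N0 > 0" and "0 < xi" and "xi \<le> 1" and "Pc > 0"
    and "\<forall>k\<in>{1..K}. W k > 0 \<and> R k > 0 \<and> h k > 0 \<and> (\<forall>n\<in>{1..N}. g k n > 0)"
    and "\<forall>n\<in>{1..N}. B n > 0 \<and> gs n > 0"
    and "N \<ge> 1"
    and "\<forall>k\<in>{1..K}. kp k \<in> {1..N} \<and> (\<forall>n\<in>{1..N}. g k n \<le> g k (kp k))"
    and "\<forall>i\<in>{1..K}. \<forall>j\<in>{1..K}. i < j \<longrightarrow>
           EE_trade N0 xi W R h g kp i > EE_trade N0 xi W R h g kp j"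
  shows "\<forall>Psi'. Psi' \<subseteq> {1..K} \<longrightarrow>
           EE_set N0 xi Pc K N W R h g B gs kp (alg2 (EE_set N0 xi Pc K N W R h g B gs kp) K)
           \<ge> EE_set N0 xi Pc K N W R h g B gs kp Psi'"
proof -
  interpret ee_system N0 xi Pc K N W R h g B gs kp
    using assms(1,2,4,5,6,8) by unfold_locales auto
  have "alg2 EE K \<subseteq> {1..K} \<and> (\<forall>k\<in>{1..K}. k \<in> alg2 EE K \<longleftrightarrow> EE (alg2 EE K) < ET k)"
    by (rule alg2_threshold_set[OF _ EE_insert_gt EE_insert_less_ET order_refl]) (use assms(9) in auto)
  then show ?thesis
    by (intro allI impI EE_le_threshold_set) auto
qed

end
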